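(* Fix a tetrahedral erasure channel $W$. Then $A(W_n)=O(1/n)$ as $n\to\infty$; that is, there is a constant $C$ (depending on $W$) such that for every $n\ge1$, every $n$th-generation descendant $W'$ of $W$ satisfies $A(W')\le C/n$.
   Context: $\mathrm{TEC}(p,q,r,s,t)$ denotes a tetrahedral erasure channel with parameters $p,q,r,s,t\ge0$ summing to $1$; its moment of inertia is $A=(q-r)^2+(r-s)^2+(s-q)^2$. For $W=\mathrm{TEC}(p,q,r,s,t)$, the serial child is $W^{s}=\mathrm{TEC}(p^2,\ ps+sq+qp,\ pq+qr+rp,\ pr+rs+sp,\ 1-\text{(sum of the other four)})$ and the parallel child is $W^{p}=\mathrm{TEC}(1-\text{(sum of the other four)},\ ts+sq+qt,\ tq+qr+rt,\ tr+rs+st,\ t^2)$. The $0$th-generation descendant of $W$ is $W$; the $n$th-generation descendants are the children of the $(n-1)$th-generation descendants. $W_n$ denotes a (uniformly random) $n$th-generation descendant obtained by choosing a child with probability $1/2$ at each step. *)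

theory Defs
  imports Complex_Main
begin

text \<open>A tetrahedral erasure channel TEC(p,q,r,s,t) is represented by its parameter tuple.\<close>
type_synonym tec = "real \<times> real \<times> real \<times> real \<times> real"

definition is_tec :: "tec \<Rightarrow> bool" where
  "is_tec W = (case W of (p,q,r,s,t) \<Rightarrow>
     p \<ge> 0 \<and> q \<ge> 0 \<and> r \<ge> 0 \<and> s \<ge> 0 \<and> t \<ge> 0 \<and> p + q + r + s + t = 1)"

definition inertia :: "tec \<Rightarrow> real" where
  "inertia W = (case W of (p,q,r,s,t) \<Rightarrow> (q - r)^2 + (r - s)^2 + (s - q)^2)"

definition serial_child :: "tec \<Rightarrow> tec" where
  "serial_child W = (case W of (p,q,r,s,t) \<Rightarrow>
     (let p' = p^2; q' = p*s + s*q + q*p; r' = p*q + q*r + r*p; s' = p*r + r*s + s*p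
      in (p', q', r', s', 1 - (p' + q' + r' + s'))))"

definition parallel_child :: "tec \<Rightarrow> tec" where
  "parallel_child W = (case W of (p,q,r,s,t) \<Rightarrow>
     (let q' = t*s + s*q + q*t; r' = t*q + q*r + r*t; s' = t*r + r*s + s*t; t' = t^2
      in (1 - (q' + r' + s' + t'), q', r', s', t')))"

fun descendants :: "nat \<Rightarrow> tec \<Rightarrow> tec set" where
  "descendants 0 W = {W}"
| "descendants (Suc n) W = (\<Union>V \<in> descendants n W. {serial_child V, parallel_child V})"

end

theory Submission
  imports Defs
begin

text \<open>
  Write a = s - r, b = q - s, c = r - q, so that A = a^2 + b^2 + c^2. For the serial child the
  corresponding differences are (p+q) a, (p+r) b, (p+s) c, and each weight f satisfies
  |x| \<le> 1 - f for the difference x it multiplies; hence (f x)^2 \<le> x^2 - x^4, and with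
  A^2 \<le> 3 (a^4 + b^4 + c^4) this gives A' \<le> A - A^2/3. Exchanging p and t turns the
  serial child into the parallel one, so the same bound holds for both children. Since
  A \<le> 3 initially and u \<mapsto> u - u^2/3 maps [0, 3/(n+1)] into [0, 3/(n+2)], induction
  gives A \<le> 3/(n+1) for all n-th generation descendants.
\<close>

definition tec_mirror :: "tec \<Rightarrow> tec" where
  "tec_mirror W = (case W of (p,q,r,s,t) \<Rightarrow> (t,q,r,s,p))"

lemma is_tec_mirror [simp]: "is_tec (tec_mirror W) = is_tec W"
  by (cases W) (auto simp: tec_mirror_def is_tec_def)

lemma inertia_mirror [simp]: "inertia (tec_mirror W) = inertia W"
  by (cases W) (simp add: tec_mirror_def inertia_def)

lemma parallel_child_conv_serial_child:
  "parallel_child W = tec_mirror (serial_child (tec_mirror W))"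
  by (cases W) (simp add: tec_mirror_def serial_child_def parallel_child_def Let_def algebra_simps)

lemma weighted_square_le:
  fixes f a :: real
  assumes "0 \<le> f" "\<bar>a\<bar> \<le> 1 - f"
  shows "(f * a)^2 \<le> a^2 - a^4"
proof -
  have "f^2 \<le> (1 - \<bar>a\<bar>)^2" using assms by (intro power_mono) auto
  also have "\<dots> \<le> 1 - a^2"
  proof -
    have "\<bar>a\<bar> * \<bar>a\<bar> \<le> \<bar>a\<bar>" using assms by (intro mult_left_le) auto
    then show ?thesis by (simp add: power2_eq_square algebra_simps abs_mult_self_eq)
  qed
  finally have "f^2 * a^2 \<le> (1 - a^2) * a^2" by (intro mult_right_mono) auto
  then show ?thesis by (simp add: power_mult_distrib algebra_simps power4_eq_xxxx power2_eq_square)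
qed

lemma weighted_sum_squares_le:
  fixes a b c f g h :: real
  assumes "0 \<le> f" "\<bar>a\<bar> \<le> 1 - f" "0 \<le> g" "\<bar>b\<bar> \<le> 1 - g" "0 \<le> h" "\<bar>c\<bar> \<le> 1 - h"
  shows "(f*a)^2 + (g*b)^2 + (h*c)^2 \<le> (a^2 + b^2 + c^2) - (a^2 + b^2 + c^2)^2 / 3"
proof -
  have "(a^2 + b^2 + c^2)^2 \<le> 3 * (a^4 + b^4 + c^4)"
  proof -
    have "0 \<le> (a^2 - b^2)^2 + (b^2 - c^2)^2 + (c^2 - a^2)^2" by simp
    then show ?thesis by (simp add: power2_eq_square power4_eq_xxxx algebra_simps)
  qed
  moreover have "(f*a)^2 + (g*b)^2 + (h*c)^2 \<le> (a^2 - a^4) + (b^2 - b^4) + (c^2 - c^4)"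
    using assms by (intro add_mono weighted_square_le)
  ultimately show ?thesis by (simp add: field_simps)
qed

lemma is_tec_serial_child:
  assumes "is_tec V"
  shows "is_tec (serial_child V)"
proof -
  obtain p q r s t where V: "V = (p,q,r,s,t)" by (cases V)
  have nn: "p \<ge> 0" "q \<ge> 0" "r \<ge> 0" "s \<ge> 0" "t \<ge> 0" and sum: "p+q+r+s+t = 1"
    using assms V by (auto simp: is_tec_def)
  have "p^2 + (p*s + s*q + q*p) + (p*q + q*r + r*p) + (p*r + r*s + s*p) \<le> (p+q+r+s)^2"
    using nn by (simp add: power2_eq_square algebra_simps)
  also have "\<dots> \<le> 1" using nn sum by (intro power_le_one) auto
  finally show ?thesis using nn by (simp add: V serial_child_def is_tec_def Let_def)
qed

lemma inertia_serial_child_le: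
  assumes "is_tec V"
  shows "inertia (serial_child V) \<le> inertia V - (inertia V)^2 / 3"
proof -
  obtain p q r s t where V: "V = (p,q,r,s,t)" by (cases V)
  have nn: "p \<ge> 0" "q \<ge> 0" "r \<ge> 0" "s \<ge> 0" "t \<ge> 0" and sum: "p+q+r+s+t = 1"
    using assms V by (auto simp: is_tec_def)
  have "inertia (serial_child V) = ((p+q)*(s-r))^2 + ((p+r)*(q-s))^2 + ((p+s)*(r-q))^2"
    by (simp add: V inertia_def serial_child_def Let_def) algebra
  also have "\<dots> \<le> ((s-r)^2 + (q-s)^2 + (r-q)^2) - ((s-r)^2 + (q-s)^2 + (r-q)^2)^2 / 3"
    using nn sum by (intro weighted_sum_squares_le) auto
  also have "(s-r)^2 + (q-s)^2 + (r-q)^2 = inertia V"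
    by (simp add: V inertia_def power2_commute)
  finally show ?thesis .
qed

lemma is_tec_parallel_child: "is_tec V \<Longrightarrow> is_tec (parallel_child V)"
  by (simp add: parallel_child_conv_serial_child is_tec_serial_child)

lemma inertia_parallel_child_le:
  "is_tec V \<Longrightarrow> inertia (parallel_child V) \<le> inertia V - (inertia V)^2 / 3"
  using inertia_serial_child_le[of "tec_mirror V"]
  by (simp add: parallel_child_conv_serial_child)

lemma inertia_le_3:
  assumes "is_tec V"
  shows "inertia V \<le> 3"
proof -
  obtain p q r s t where V: "V = (p,q,r,s,t)" by (cases V)
  have "\<bar>q - r\<bar> \<le> 1" "\<bar>r - s\<bar> \<le> 1" "\<bar>s - q\<bar> \<le> 1"
    using assms V by (auto simp: is_tec_def)
  then have "(q - r)^2 \<le> 1" "(r - s)^2 \<le> 1" "(s - q)^2 \<le> 1"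
    by (simp_all add: abs_square_le_1)
  then show ?thesis by (simp add: V inertia_def)
qed

lemma inertia_nonneg: "0 \<le> inertia V"
  by (cases V) (simp add: inertia_def)

lemma is_tec_descendants: "is_tec W \<Longrightarrow> W' \<in> descendants n W \<Longrightarrow> is_tec W'"
  by (induction n arbitrary: W') (auto simp: is_tec_serial_child is_tec_parallel_child)

lemma quadratic_decay_step:
  fixes c u :: real and n :: nat
  assumes "0 < c" "0 \<le> u" "u \<le> c / (real n + 1)"
  shows "u - u^2 / c \<le> c / (real n + 2)"
proof (cases "n = 0")
  case True
  have "0 \<le> (u - c/2)^2 / c" using \<open>0 < c\<close> by simp
  then have "u - u^2 / c \<le> c / 4" using \<open>0 < c\<close> by (simp add: power2_eq_square field_simps)
  moreover have "c / 4 \<le> c / (real n + 2)" using True \<open>0 < c\<close> by simp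
  ultimately show ?thesis by linarith
next
  case False
  define m where "m = real n + 1"
  have "m \<ge> 2" using False by (simp add: m_def)
  have "u \<le> c / m" using assms by (simp add: m_def add.commute)
  moreover have "c / m \<le> c / 2" using \<open>m \<ge> 2\<close> \<open>0 < c\<close> by (intro divide_left_mono) auto
  ultimately have "0 \<le> c/m - u" "0 \<le> c - (c/m + u)" using \<open>0 \<le> u\<close> by linarith+
  then have "0 \<le> (c/m - u) * (c - (c/m + u)) / c" using \<open>0 < c\<close> by simp
  also have "\<dots> = (c/m - (c/m)^2 / c) - (u - u^2 / c)"
    using \<open>0 < c\<close> \<open>m \<ge> 2\<close> by (simp add: field_simps power2_eq_square)
  finally have "u - u^2 / c \<le> c/m - (c/m)^2 / c" by simp
  also have "\<dots> = c * (m - 1) / m^2"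
    using \<open>0 < c\<close> \<open>m \<ge> 2\<close> by (simp add: field_simps power2_eq_square)
  also have "\<dots> \<le> c / (m + 1)"
  proof -
    have "(m - 1) * (m + 1) \<le> m^2" by (simp add: power2_eq_square algebra_simps)
    from mult_left_mono[OF this, of c] \<open>0 < c\<close> \<open>m \<ge> 2\<close> show ?thesis
      by (simp add: field_simps)
  qed
  finally show ?thesis by (simp add: m_def add.commute)
qed

lemma inertia_descendants_le:
  assumes "is_tec W"
  shows "W' \<in> descendants n W \<Longrightarrow> inertia W' \<le> 3 / (real n + 1)"
proof (induction n arbitrary: W')
  case 0
  then show ?case using assms inertia_le_3 by simp
next
  case (Suc n)
  then obtain V where V: "V \<in> descendants n W" "W' = serial_child V \<or> W' = parallel_child V"
    by auto
  have "is_tec V" using assms V(1) by (rule is_tec_descendants)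
  then have "inertia W' \<le> inertia V - (inertia V)^2 / 3"
    using V(2) inertia_serial_child_le inertia_parallel_child_le by blast
  also have "\<dots> \<le> 3 / (real n + 2)"
    by (rule quadratic_decay_step[OF _ inertia_nonneg Suc.IH[OF V(1)]]) simp
  finally show ?case by (simp add: add.commute)
qed

theorem mainTheorem3:
  fixes W :: tec
  assumes "is_tec W"
  shows "\<exists>C::real. \<forall>n::nat. n \<ge> 1 \<longrightarrow>
           (\<forall>W' \<in> descendants n W. inertia W' \<le> C / real n)"
proof (intro exI allI impI ballI)
  fix n :: nat and W'
  assume "n \<ge> 1" "W' \<in> descendants n W"
  then have "inertia W' \<le> 3 / (real n + 1)" by (intro inertia_descendants_le[OF assms])
  also have "\<dots> \<le> 3 / n" using \<open>n \<ge> 1\<close> by (intro divide_left_mono) auto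
  finally show "inertia W' \<le> 3 / real n" .
qed

end
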